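(* Let $S_0,S_1,S_2$ be pair-partitions of $[2k]$, and let $\mathbf{p}=(p_1,\dots,p_m)$, $\mathbf{q}=(q_1,\dots,q_m)$ be sequences of positive integers with $q_1\ge\cdots\ge q_m$. Then $$N^{(1)}_{S_0,S_1,S_2}(\mathbf{p}\times\mathbf{q})=\sum_{\varphi:\mathcal{L}(S_0,S_2)\to\mathbb{N}^\star}\ \prod_{\ell\in\mathcal{L}(S_0,S_2)}p_{\varphi(\ell)}\prod_{m'\in\mathcal{L}(S_0,S_1)}q_{\psi(m')},$$ with the convention $p_i=q_i=0$ for $i>m$, where $\psi(m')=\max_\ell\varphi(\ell)$, $\ell$ running over the loops of $\mathcal{L}(S_0,S_2)$ which have an edge with the same label as some edge of $m'$.
   Context: Pair-partitions of $[2k]$ are sets of disjoint two-element subsets with union $[2k]$, identified with fixed-point-free involutions. $\mathcal{L}(A,B)$ is the bipartite graph with a black vertex per pair of $A$, a white vertex per pair of $B$, and an edge labeled $i$ for each $i\in[2k]$ joining the pairs containing $i$; it is viewed as the set of its connected components (loops). $\mathbf{p}\times\mathbf{q}$ is the partition consisting of $q_i$ repeated $p_i$ times for $i=1,\dots,m$. $N^{(1)}_{S_0,S_1,S_2}(\lambda)$ is the number of functions $f$ from $[2k]$ to the boxes of $\lambda$ such that for all $l$: $f(l)=f(S_0(l))$; $f(l)$ and $f(S_1(l))$ are in the same column; $f(l)$ and $f(S_2(l))$ are in the same row. *)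

theory Defs
  imports Main "HOL-Library.FuncSet"
begin

definition pair_partition :: "nat \<Rightarrow> (nat \<Rightarrow> nat) \<Rightarrow> bool" where
  "pair_partition k S \<longleftrightarrow>
     (\<forall>i\<in>{1..2*k}. S i \<in> {1..2*k} \<and> S i \<noteq> i \<and> S (S i) = i)"

text \<open>Loops of L(A,B): connected components, each identified with its set of edge labels,
  i.e. the classes of {1..2k} under the equivalence generated by i ~ A i and i ~ B i.\<close>
definition loop_rel :: "nat \<Rightarrow> (nat \<Rightarrow> nat) \<Rightarrow> (nat \<Rightarrow> nat) \<Rightarrow> (nat \<times> nat) set" where
  "loop_rel k A B =
     ({(i, A i) | i. i \<in> {1..2*k}} \<union> {(i, B i) | i. i \<in> {1..2*k}})\<^sup>*"

definition loops :: "nat \<Rightarrow> (nat \<Rightarrow> nat) \<Rightarrow> (nat \<Rightarrow> nat) \<Rightarrow> nat set set" where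
  "loops k A B = {1..2*k} // loop_rel k A B"

text \<open>Partition p x q, as the list of its row lengths: q_i repeated p_i times, i = 1..m.\<close>
definition pq_partition :: "nat \<Rightarrow> (nat \<Rightarrow> nat) \<Rightarrow> (nat \<Rightarrow> nat) \<Rightarrow> nat list" where
  "pq_partition m p q = concat (map (\<lambda>i. replicate (p i) (q i)) [1..<Suc m])"

definition boxes :: "nat list \<Rightarrow> (nat \<times> nat) set" where
  "boxes lam = {(r, c). 1 \<le> r \<and> r \<le> length lam \<and> 1 \<le> c \<and> c \<le> lam ! (r - 1)}"

definition N1 :: "nat \<Rightarrow> (nat \<Rightarrow> nat) \<Rightarrow> (nat \<Rightarrow> nat) \<Rightarrow> (nat \<Rightarrow> nat) \<Rightarrow> nat list \<Rightarrow> nat" where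
  "N1 k S0 S1 S2 lam = card {f \<in> {1..2*k} \<rightarrow>\<^sub>E boxes lam.
     \<forall>l\<in>{1..2*k}. f l = f (S0 l) \<and> snd (f l) = snd (f (S1 l)) \<and> fst (f l) = fst (f (S2 l))}"

end

theory Submission
  imports Defs
begin

(*
  An admissible map f is constant in its row along the loops of L(S0,S2) and constant in its
  column along the loops of L(S0,S1).  It is therefore the same as a row r(l) for every loop l
  of L(S0,S2) together with a column c(m) for every loop m of L(S0,S1), subject only to c(m)
  fitting into every row r(l) with l meeting m: given r, the column c(m) ranges over
  1 .. min of those row lengths, independently for each m.  For the diagram p x q the rows come
  in blocks of p_i rows of length q_i; grouping the row assignments r by the block phi(l) of
  r(l) produces the weight prod p_phi(l), and as q is non-increasing the minimal row length met
  by m is q at the largest block met by m.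
*)

lemma quotient_eq_class:
  assumes "equiv A R" "X \<in> A // R" "x \<in> X"
  shows "X = R `` {x}"
  using assms by (metis equiv_class_eq quotientE Image_singleton_iff)

lemma some_in_quotient:
  assumes "equiv A R" "X \<in> A // R"
  shows "(SOME x. x \<in> X) \<in> X"
  using in_quotient_imp_non_empty[OF assms] by (simp add: some_in_eq)

lemma respects_some_in_quotient:
  assumes "equiv A R" "g respects R" "X \<in> A // R" "x \<in> X"
  shows "g (SOME y. y \<in> X) = g x"
  using assms some_in_quotient[OF assms(1,3)] in_quotient_imp_in_rel[OF assms(1,3)]
  by (auto simp: congruent_def)

lemma class_meets_quotient:
  assumes "equiv A R1" "equiv A R2" "c \<in> A // R1"
  shows "\<exists>l \<in> A // R2. l \<inter> c \<noteq> {}"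
proof -
  obtain x where "x \<in> c"
    using in_quotient_imp_non_empty[OF assms(1,3)] by blast
  moreover have "x \<in> A"
    using in_quotient_imp_subset[OF assms(1,3)] \<open>x \<in> c\<close> by blast
  ultimately show ?thesis
    using quotientI[of x A R2] equiv_class_self[OF assms(2)] by blast
qed

lemma mem_boxesD:
  assumes "x \<in> boxes lam"
  shows "fst x \<in> {1..length lam}" "snd x \<in> {1..lam ! (fst x - 1)}"
  using assms by (cases x, simp add: boxes_def)+

definition column_bound :: "nat list \<Rightarrow> 'a set set \<Rightarrow> ('a set \<Rightarrow> nat) \<Rightarrow> 'a set \<Rightarrow> nat" where
  "column_bound lam L r c = Min {lam ! (r l - 1) | l. l \<in> L \<and> l \<inter> c \<noteq> {}}"

lemma column_bound_le:
  assumes "finite A" "equiv A R1" "equiv A R2" "i \<in> A"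
  shows "column_bound lam (A // R2) r (R1 `` {i}) \<le> lam ! (r (R2 `` {i}) - 1)"
  unfolding column_bound_def
proof (rule Min_le)
  show "finite {lam ! (r l - 1) | l. l \<in> A // R2 \<and> l \<inter> R1 `` {i} \<noteq> {}}"
    using finite_quotient[OF assms(1) equiv_type[OF assms(3)]] by simp
  show "lam ! (r (R2 `` {i}) - 1) \<in> {lam ! (r l - 1) | l. l \<in> A // R2 \<and> l \<inter> R1 `` {i} \<noteq> {}}"
    using quotientI[OF assms(4)] equiv_class_self[OF assms(2,4)] equiv_class_self[OF assms(3,4)]
    by blast
qed

lemma column_bound_ge:
  assumes "finite A" "equiv A R1" "equiv A R2" "f \<in> A \<rightarrow>\<^sub>E boxes lam"
    and "\<forall>l \<in> A // R2. \<forall>j \<in> l. r l = fst (f j)"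
    and "c \<in> A // R1" "\<forall>j \<in> c. snd (f j) = s"
  shows "s \<le> column_bound lam (A // R2) r c"
  unfolding column_bound_def
proof (rule Min.boundedI)
  show "finite {lam ! (r l - 1) | l. l \<in> A // R2 \<and> l \<inter> c \<noteq> {}}"
    using finite_quotient[OF assms(1) equiv_type[OF assms(3)]] by simp
  show "{lam ! (r l - 1) | l. l \<in> A // R2 \<and> l \<inter> c \<noteq> {}} \<noteq> {}"
    using class_meets_quotient[OF assms(2,3,6)] by blast
  fix a assume "a \<in> {lam ! (r l - 1) | l. l \<in> A // R2 \<and> l \<inter> c \<noteq> {}}"
  then obtain l j where "l \<in> A // R2" "j \<in> l" "j \<in> c" "a = lam ! (r l - 1)"
    by blast
  moreover have "f j \<in> boxes lam"
    using assms(4) in_quotient_imp_subset[OF assms(2,6)] \<open>j \<in> c\<close> by blast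
  ultimately show "s \<le> a"
    using mem_boxesD(2) assms(5,7) by fastforce
qed

lemma class_assignment_in_boxes_maps:
  assumes "finite A" "equiv A R1" "equiv A R2"
    and "r \<in> A // R2 \<rightarrow>\<^sub>E {1..length lam}"
    and "c \<in> (\<Pi>\<^sub>E m \<in> A // R1. {1..column_bound lam (A // R2) r m})"
  shows "(\<lambda>i\<in>A. (r (R2 `` {i}), c (R1 `` {i})))
    \<in> {f \<in> A \<rightarrow>\<^sub>E boxes lam. (\<lambda>i. fst (f i)) respects R2 \<and> (\<lambda>i. snd (f i)) respects R1}"
proof -
  have "(r (R2 `` {i}), c (R1 `` {i})) \<in> boxes lam" if i: "i \<in> A" for i
  proof -
    have "r (R2 `` {i}) \<in> {1..length lam}"
      using assms(4) quotientI[OF i] by blast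
    moreover have "c (R1 `` {i}) \<in> {1..column_bound lam (A // R2) r (R1 `` {i})}"
      using assms(5) quotientI[OF i] by blast
    ultimately show ?thesis
      using column_bound_le[OF assms(1-3) i, of lam r] unfolding boxes_def by auto
  qed
  moreover have "R `` {y} = R `` {z} \<and> y \<in> A \<and> z \<in> A" if "equiv A R" "(y, z) \<in> R" for R y z
    using equiv_class_eq_iff[OF that(1)] that(2) by blast
  then have "(\<lambda>i. fst ((\<lambda>i\<in>A. (r (R2 `` {i}), c (R1 `` {i}))) i)) respects R2"
    "(\<lambda>i. snd ((\<lambda>i\<in>A. (r (R2 `` {i}), c (R1 `` {i}))) i)) respects R1"
    using assms(2,3) by (auto intro!: congruentI)
  ultimately show ?thesis
    by simp
qed

lemma bij_betw_class_assignments_boxes_maps: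
  assumes "finite A" "equiv A R1" "equiv A R2"
  shows "bij_betw (\<lambda>(r, c). \<lambda>i\<in>A. (r (R2 `` {i}), c (R1 `` {i})))
    (SIGMA r : A // R2 \<rightarrow>\<^sub>E {1..length lam}. \<Pi>\<^sub>E m \<in> A // R1. {1..column_bound lam (A // R2) r m})
    {f \<in> A \<rightarrow>\<^sub>E boxes lam. (\<lambda>i. fst (f i)) respects R2 \<and> (\<lambda>i. snd (f i)) respects R1}"
    (is "bij_betw ?\<Theta> ?P ?F")
proof (rule bij_betw_byWitness)
  define \<Psi> where "\<Psi> f = ((\<lambda>l\<in>A // R2. fst (f (SOME i. i \<in> l))), (\<lambda>m\<in>A // R1. snd (f (SOME i. i \<in> m))))"
    for f :: "'a \<Rightarrow> nat \<times> nat"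
  have rep: "R `` {SOME i. i \<in> X} = X" "(SOME i. i \<in> X) \<in> A" if "equiv A R" "X \<in> A // R" for R X
    using quotient_eq_class[OF that some_in_quotient[OF that]]
      in_quotient_imp_subset[OF that] some_in_quotient[OF that] by auto
  show "\<forall>x\<in>?P. \<Psi> (?\<Theta> x) = x"
    unfolding \<Psi>_def using rep[OF assms(2)] rep[OF assms(3)]
    by (auto simp: fun_eq_iff PiE_iff extensional_def)
  show "\<forall>f\<in>?F. ?\<Theta> (\<Psi> f) = f"
  proof
    fix f assume f: "f \<in> ?F"
    show "?\<Theta> (\<Psi> f) = f"
    proof (rule extensionalityI[where A = A])
      show "f \<in> extensional A" using f by (simp add: PiE_iff)
      fix i assume i: "i \<in> A"
      have "fst (f (SOME j. j \<in> R2 `` {i})) = fst (f i)" "snd (f (SOME j. j \<in> R1 `` {i})) = snd (f i)"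
        using f respects_some_in_quotient[OF assms(3) _ quotientI[OF i] equiv_class_self[OF assms(3) i]]
          respects_some_in_quotient[OF assms(2) _ quotientI[OF i] equiv_class_self[OF assms(2) i]]
        by blast+
      with i show "?\<Theta> (\<Psi> f) i = f i"
        unfolding \<Psi>_def by (simp add: quotientI prod_eq_iff)
    qed (simp add: \<Psi>_def)
  qed
  show "?\<Theta> ` ?P \<subseteq> ?F"
  proof (rule image_subsetI)
    fix x assume "x \<in> ?P"
    then obtain r c where x: "x = (r, c)" "r \<in> A // R2 \<rightarrow>\<^sub>E {1..length lam}"
      "c \<in> (\<Pi>\<^sub>E m \<in> A // R1. {1..column_bound lam (A // R2) r m})"
      by blast
    show "?\<Theta> x \<in> ?F"
      unfolding x(1) case_prod_conv by (rule class_assignment_in_boxes_maps[OF assms x(2,3)])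
  qed
  show "\<Psi> ` ?F \<subseteq> ?P"
  proof (rule image_subsetI)
    fix f assume "f \<in> ?F"
    then have f: "f \<in> A \<rightarrow>\<^sub>E boxes lam" "(\<lambda>i. fst (f i)) respects R2" "(\<lambda>i. snd (f i)) respects R1"
      by blast+
    define r where "r = (\<lambda>l\<in>A // R2. fst (f (SOME i. i \<in> l)))"
    have box: "f i \<in> boxes lam" if "i \<in> A" for i
      using f(1) that by blast
    have "r \<in> A // R2 \<rightarrow>\<^sub>E {1..length lam}"
      unfolding r_def using mem_boxesD(1)[OF box] rep(2)[OF assms(3)] by auto
    moreover have "snd (f (SOME i. i \<in> m)) \<in> {1..column_bound lam (A // R2) r m}" if m: "m \<in> A // R1" for m
    proof -
      have "\<forall>l \<in> A // R2. \<forall>j \<in> l. r l = fst (f j)"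
        unfolding r_def using respects_some_in_quotient[OF assms(3) f(2)] by simp
      moreover have "\<forall>j \<in> m. snd (f j) = snd (f (SOME i. i \<in> m))"
        using respects_some_in_quotient[OF assms(2) f(3) m] by simp
      ultimately show ?thesis
        using column_bound_ge[OF assms f(1) _ m] mem_boxesD(2)[OF box] rep(2)[OF assms(2) m] by auto
    qed
    ultimately show "\<Psi> f \<in> ?P"
      unfolding \<Psi>_def r_def by auto
  qed
qed

lemma card_boxes_maps_respecting:
  assumes "finite A" "equiv A R1" "equiv A R2"
  shows "card {f \<in> A \<rightarrow>\<^sub>E boxes lam. (\<lambda>i. fst (f i)) respects R2 \<and> (\<lambda>i. snd (f i)) respects R1}
    = (\<Sum>r \<in> A // R2 \<rightarrow>\<^sub>E {1..length lam}. \<Prod>c \<in> A // R1. column_bound lam (A // R2) r c)"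
proof -
  have "finite (A // R1)" "finite (A // R2)"
    using finite_quotient[OF assms(1)] equiv_type[OF assms(2)] equiv_type[OF assms(3)] by auto
  then show ?thesis
    using bij_betw_same_card[OF bij_betw_class_assignments_boxes_maps[OF assms, of lam]]
    by (simp add: card_PiE finite_PiE)
qed

lemma sum_PiE_compose_fibres:
  fixes G :: "('a \<Rightarrow> 'b) \<Rightarrow> 'c::comm_semiring_1"
  assumes "finite L" "finite X" "finite Y" "b ` X \<subseteq> Y"
  shows "(\<Sum>r \<in> L \<rightarrow>\<^sub>E X. G (\<lambda>l\<in>L. b (r l)))
    = (\<Sum>\<phi> \<in> L \<rightarrow>\<^sub>E Y. of_nat (\<Prod>l\<in>L. card {x \<in> X. b x = \<phi> l}) * G \<phi>)"
proof -
  let ?g = "\<lambda>r. \<lambda>l\<in>L. b (r l)"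
  have fibre: "{r \<in> L \<rightarrow>\<^sub>E X. ?g r = \<phi>} = (\<Pi>\<^sub>E l\<in>L. {x \<in> X. b x = \<phi> l})"
    if "\<phi> \<in> L \<rightarrow>\<^sub>E Y" for \<phi>
    using that by (auto simp: PiE_iff fun_eq_iff extensional_def)
  have "(\<Sum>r \<in> L \<rightarrow>\<^sub>E X. G (?g r)) = (\<Sum>\<phi> \<in> L \<rightarrow>\<^sub>E Y. \<Sum>r \<in> {r \<in> L \<rightarrow>\<^sub>E X. ?g r = \<phi>}. G (?g r))"
    by (rule sum.group[symmetric]) (use assms in \<open>auto simp: finite_PiE PiE_iff image_subset_iff\<close>)
  also have "\<dots> = (\<Sum>\<phi> \<in> L \<rightarrow>\<^sub>E Y. of_nat (card {r \<in> L \<rightarrow>\<^sub>E X. ?g r = \<phi>}) * G \<phi>)"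
    by (rule sum.cong[OF refl]) simp
  also have "\<dots> = (\<Sum>\<phi> \<in> L \<rightarrow>\<^sub>E Y. of_nat (\<Prod>l\<in>L. card {x \<in> X. b x = \<phi> l}) * G \<phi>)"
    by (rule sum.cong[OF refl]) (simp add: fibre card_PiE[OF assms(1)])
  finally show ?thesis .
qed

lemma Min_image_antimono_on:
  fixes q :: "'a::linorder \<Rightarrow> 'b::linorder"
  assumes "antimono_on X q" "finite X" "X \<noteq> {}"
  shows "Min (q ` X) = q (Max X)"
proof (rule Min_eqI)
  fix y assume "y \<in> q ` X"
  then obtain x where "x \<in> X" "y = q x" by blast
  moreover have "x \<le> Max X"
    using assms(2) \<open>x \<in> X\<close> by simp
  ultimately show "q (Max X) \<le> y"
    using monotone_onD[OF assms(1)] Max_in[OF assms(2,3)] by blast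
qed (use assms in auto)

lemma column_bound_eq_Max:
  fixes q :: "nat \<Rightarrow> nat"
  assumes "finite L" "antimono_on Y q" "\<phi> ` L \<subseteq> Y"
    and "\<forall>l\<in>L. lam ! (r l - 1) = q (\<phi> l)" and "\<exists>l\<in>L. l \<inter> c \<noteq> {}"
  shows "column_bound lam L r c = q (Max {\<phi> l | l. l \<in> L \<and> l \<inter> c \<noteq> {}})"
proof -
  let ?X = "{\<phi> l | l. l \<in> L \<and> l \<inter> c \<noteq> {}}"
  have "{lam ! (r l - 1) | l. l \<in> L \<and> l \<inter> c \<noteq> {}} = q ` ?X"
    using assms(4) by force
  moreover have "antimono_on ?X q"
    by (rule monotone_on_subset[OF assms(2)]) (use assms(3) in blast)
  moreover have "finite ?X" "?X \<noteq> {}"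
    using assms(1,5) by auto
  ultimately show ?thesis
    unfolding column_bound_def by (simp add: Min_image_antimono_on)
qed

lemma loop_rel_step:
  assumes "i \<in> {1..2*k}"
  shows "(i, S i) \<in> loop_rel k S T" and "(i, T i) \<in> loop_rel k S T"
  using assms unfolding loop_rel_def by auto

lemma respects_loop_rel:
  assumes "\<forall>i\<in>{1..2*k}. g i = g (S i) \<and> g i = g (T i)"
  shows "g respects loop_rel k S T"
proof (rule congruentI)
  fix x y assume "(x, y) \<in> loop_rel k S T"
  then show "g x = g y"
    unfolding loop_rel_def by (induction rule: rtrancl_induct) (use assms in auto)
qed

lemma loop_rel_closed:
  assumes "pair_partition k S" "pair_partition k T"
    and "(x, y) \<in> loop_rel k S T" "x \<in> {1..2*k}"
  shows "y \<in> {1..2*k}"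
  using assms(3,4) unfolding loop_rel_def
  by (induction rule: rtrancl_induct) (use assms(1,2) in \<open>auto simp: pair_partition_def\<close>)

lemma equiv_Restr_loop_rel:
  assumes "pair_partition k S" "pair_partition k T"
  shows "equiv {1..2*k} (Restr (loop_rel k S T) {1..2*k})"
proof (rule equivI)
  let ?E = "{(i, S i) | i. i \<in> {1..2*k}} \<union> {(i, T i) | i. i \<in> {1..2*k}}"
  have "sym ?E"
  proof (rule symI)
    have flip: "(U i, i) \<in> ?E" if "i \<in> {1..2*k}" "U = S \<or> U = T" for U i
    proof -
      have "U i \<in> {1..2*k}" "U (U i) = i"
        using assms that unfolding pair_partition_def by auto
      moreover have "(U i, U (U i)) \<in> ?E"
        using that \<open>U i \<in> {1..2*k}\<close> by blast
      ultimately show ?thesis by simp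
    qed
    fix a b assume "(a, b) \<in> ?E"
    then show "(b, a) \<in> ?E"
      using flip by blast
  qed
  then have "sym (loop_rel k S T)"
    unfolding loop_rel_def by (rule sym_rtrancl)
  then show "sym (Restr (loop_rel k S T) {1..2*k})"
    by (auto simp: sym_def)
  have "trans (loop_rel k S T)"
    unfolding loop_rel_def by (rule trans_rtrancl)
  then show "trans (Restr (loop_rel k S T) {1..2*k})"
    by (auto simp: trans_def)
  show "refl_on {1..2*k} (Restr (loop_rel k S T) {1..2*k})"
    by (auto simp: refl_on_def loop_rel_def)
qed auto

lemma loops_eq_quotient_Restr:
  assumes "pair_partition k S" "pair_partition k T"
  shows "loops k S T = {1..2*k} // Restr (loop_rel k S T) {1..2*k}"
proof -
  have "Restr (loop_rel k S T) {1..2*k} `` {i} = loop_rel k S T `` {i}" if "i \<in> {1..2*k}" for i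
    using loop_rel_closed[OF assms] that by auto
  then show ?thesis
    unfolding loops_def quotient_def by auto
qed

lemma N1_eq_card_respecting:
  assumes "pair_partition k S0" "pair_partition k S1" "pair_partition k S2"
  shows "N1 k S0 S1 S2 lam = card {f \<in> {1..2*k} \<rightarrow>\<^sub>E boxes lam.
     (\<lambda>i. fst (f i)) respects Restr (loop_rel k S0 S2) {1..2*k} \<and>
     (\<lambda>i. snd (f i)) respects Restr (loop_rel k S0 S1) {1..2*k}}"
proof -
  have conditions_iff: "(\<forall>l\<in>{1..2*k}. f l = f (S0 l) \<and> snd (f l) = snd (f (S1 l)) \<and> fst (f l) = fst (f (S2 l)))
    \<longleftrightarrow> (\<lambda>i. fst (f i)) respects Restr (loop_rel k S0 S2) {1..2*k} \<and>
        (\<lambda>i. snd (f i)) respects Restr (loop_rel k S0 S1) {1..2*k}" for f :: "nat \<Rightarrow> nat \<times> nat"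
  proof
    assume "\<forall>l\<in>{1..2*k}. f l = f (S0 l) \<and> snd (f l) = snd (f (S1 l)) \<and> fst (f l) = fst (f (S2 l))"
    then have "(\<lambda>i. fst (f i)) respects loop_rel k S0 S2" "(\<lambda>i. snd (f i)) respects loop_rel k S0 S1"
      by (auto intro!: respects_loop_rel)
    then show "(\<lambda>i. fst (f i)) respects Restr (loop_rel k S0 S2) {1..2*k} \<and>
        (\<lambda>i. snd (f i)) respects Restr (loop_rel k S0 S1) {1..2*k}"
      by (auto simp: congruent_def)
  next
    assume respects: "(\<lambda>i. fst (f i)) respects Restr (loop_rel k S0 S2) {1..2*k} \<and>
        (\<lambda>i. snd (f i)) respects Restr (loop_rel k S0 S1) {1..2*k}"
    show "\<forall>l\<in>{1..2*k}. f l = f (S0 l) \<and> snd (f l) = snd (f (S1 l)) \<and> fst (f l) = fst (f (S2 l))"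
    proof (intro ballI conjI)
      fix l assume l: "l \<in> {1..2*k}"
      then have "S0 l \<in> {1..2*k}" "S1 l \<in> {1..2*k}" "S2 l \<in> {1..2*k}"
        using assms by (auto simp: pair_partition_def)
      with l have "(l, S0 l) \<in> Restr (loop_rel k S0 S1) {1..2*k}"
        "(l, S1 l) \<in> Restr (loop_rel k S0 S1) {1..2*k}"
        "(l, S0 l) \<in> Restr (loop_rel k S0 S2) {1..2*k}"
        "(l, S2 l) \<in> Restr (loop_rel k S0 S2) {1..2*k}"
        by (simp_all add: loop_rel_step)
      with respects show "f l = f (S0 l)" "snd (f l) = snd (f (S1 l))" "fst (f l) = fst (f (S2 l))"
        unfolding congruent_def by (blast intro: prod_eqI)+
    qed
  qed
  show ?thesis
    unfolding N1_def by (simp only: conditions_iff)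
qed

lemma pq_partition_row_blocks:
  obtains b where
    "\<forall>r\<in>{1..length (pq_partition m p q)}. b r \<in> {1..m} \<and> pq_partition m p q ! (r - 1) = q (b r)"
    "\<forall>i\<in>{1..m}. card {r\<in>{1..length (pq_partition m p q)}. b r = i} = p i"
proof -
  have "\<exists>b. (\<forall>r\<in>{1..length (pq_partition m p q)}. b r \<in> {1..m} \<and> pq_partition m p q ! (r - 1) = q (b r))
    \<and> (\<forall>i\<in>{1..m}. card {r\<in>{1..length (pq_partition m p q)}. b r = i} = p i)"
  proof (induction m)
    case 0
    then show ?case by (simp add: pq_partition_def)
  next
    case (Suc m)
    then obtain b where
      b_row: "\<forall>r\<in>{1..length (pq_partition m p q)}. b r \<in> {1..m} \<and> pq_partition m p q ! (r - 1) = q (b r)"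
      and b_card: "\<forall>i\<in>{1..m}. card {r\<in>{1..length (pq_partition m p q)}. b r = i} = p i"
      by blast
    define n where "n = length (pq_partition m p q)"
    define b' where "b' r = (if r \<le> n then b r else Suc m)" for r
    have snoc: "pq_partition (Suc m) p q = pq_partition m p q @ replicate (p (Suc m)) (q (Suc m))"
      by (simp add: pq_partition_def)
    then have len: "length (pq_partition (Suc m) p q) = n + p (Suc m)"
      by (simp add: n_def)
    have "b' r \<in> {1..Suc m} \<and> pq_partition (Suc m) p q ! (r - 1) = q (b' r)"
      if "r \<in> {1..n + p (Suc m)}" for r
      using b_row that unfolding snoc b'_def n_def by (auto simp: nth_append intro: le_SucI)
    moreover have "card {r\<in>{1..n + p (Suc m)}. b' r = i} = p i" if "i \<in> {1..Suc m}" for i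
    proof (cases "i = Suc m")
      case True
      then have "{r\<in>{1..n + p (Suc m)}. b' r = i} = {n+1..n + p (Suc m)}"
        using b_row unfolding b'_def n_def by force
      then show ?thesis using True by simp
    next
      case False
      then have "{r\<in>{1..n + p (Suc m)}. b' r = i} = {r\<in>{1..n}. b r = i}"
        unfolding b'_def by auto
      then show ?thesis using b_card that False n_def by auto
    qed
    ultimately show ?case
      unfolding len by blast
  qed
  then show thesis
    using that by blast
qed

theorem lemma3p9:
  fixes k m :: nat and S0 S1 S2 p q :: "nat \<Rightarrow> nat"
  assumes "pair_partition k S0" and "pair_partition k S1" and "pair_partition k S2"
    and "\<forall>i\<in>{1..m}. 0 < p i \<and> 0 < q i"
    and "\<forall>i j. 1 \<le> i \<longrightarrow> i \<le> j \<longrightarrow> j \<le> m \<longrightarrow> q j \<le> q i"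
  shows "N1 k S0 S1 S2 (pq_partition m p q) =
    (\<Sum>\<phi> \<in> loops k S0 S2 \<rightarrow>\<^sub>E {1..m}.
       (\<Prod>l\<in>loops k S0 S2. p (\<phi> l)) *
       (\<Prod>m'\<in>loops k S0 S1. q (Max {\<phi> l | l. l \<in> loops k S0 S2 \<and> l \<inter> m' \<noteq> {}})))"
proof -
  define A where "A = {1..2*k}"
  define R1 where "R1 = Restr (loop_rel k S0 S1) A"
  define R2 where "R2 = Restr (loop_rel k S0 S2) A"
  define lam where "lam = pq_partition m p q"
  define G where "G \<phi> = (\<Prod>c \<in> A // R1. q (Max {\<phi> l | l. l \<in> A // R2 \<and> l \<inter> c \<noteq> {}}))"
    for \<phi> :: "nat set \<Rightarrow> nat"
  obtain b where b_row: "\<forall>r\<in>{1..length lam}. b r \<in> {1..m} \<and> lam ! (r - 1) = q (b r)"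
    and b_card: "\<forall>i\<in>{1..m}. card {r\<in>{1..length lam}. b r = i} = p i"
    using pq_partition_row_blocks unfolding lam_def by blast
  have equiv: "equiv A R1" "equiv A R2"
    unfolding A_def R1_def R2_def using equiv_Restr_loop_rel assms(1-3) by blast+
  have loops: "loops k S0 S1 = A // R1" "loops k S0 S2 = A // R2"
    unfolding A_def R1_def R2_def using assms(1-3) by (simp_all add: loops_eq_quotient_Restr)
  have finite: "finite A" "finite (A // R2)"
    using finite_quotient[OF _ equiv_type[OF equiv(2)]] unfolding A_def by auto
  have antimono: "antimono_on {1..m} q"
    using assms(5) by (auto simp: monotone_on_def)
  have "N1 k S0 S1 S2 lam = (\<Sum>r \<in> A // R2 \<rightarrow>\<^sub>E {1..length lam}. \<Prod>c \<in> A // R1. column_bound lam (A // R2) r c)"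
    using N1_eq_card_respecting[OF assms(1-3)] card_boxes_maps_respecting[OF finite(1) equiv]
    unfolding A_def R1_def R2_def by simp
  also have "\<dots> = (\<Sum>r \<in> A // R2 \<rightarrow>\<^sub>E {1..length lam}. G (\<lambda>l \<in> A // R2. b (r l)))"
    unfolding G_def using b_row finite(2) antimono class_meets_quotient[OF equiv]
    by (intro sum.cong prod.cong refl column_bound_eq_Max) (auto simp: PiE_iff)
  also have "\<dots> = (\<Sum>\<phi> \<in> A // R2 \<rightarrow>\<^sub>E {1..m}. (\<Prod>l \<in> A // R2. card {r\<in>{1..length lam}. b r = \<phi> l}) * G \<phi>)"
    using b_row finite(2) by (subst sum_PiE_compose_fibres) auto
  also have "\<dots> = (\<Sum>\<phi> \<in> A // R2 \<rightarrow>\<^sub>E {1..m}. (\<Prod>l \<in> A // R2. p (\<phi> l)) * G \<phi>)"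
    using b_card by (intro sum.cong prod.cong refl arg_cong2[where f = "(*)"]) auto
  finally show ?thesis
    unfolding lam_def G_def loops .
qed

end
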